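(* Let $\vec G$ be an oriented graph whose underlying graph $G$ has maximum average degree $\mathrm{mad}(G)<8/3$. Then the push graph $[\vec G]$ admits a homomorphism to the oriented graph $\vec P_3^+$; that is, some presentation of $[\vec G]$ admits a homomorphism to $\vec P_3^+$.
   Context: The maximum average degree of an undirected graph $G$ is $\mathrm{mad}(G)=\max\{2|E(H)|/|V(H)| : H \text{ a subgraph of } G \text{ with } V(H)\neq\emptyset\}$. $\vec P_3^+$ is the oriented graph on vertices $\{a,b,c,d\}$ with arcs $ac,\ cb,\ ba$ (a directed $3$-cycle) and $da,\ db,\ dc$. An oriented graph is a directed graph with no loops and no pair of opposite arcs. A homomorphism of oriented graphs $\vec G\to\vec H$ is a vertex map sending every arc $uv$ to an arc $\varphi(u)\varphi(v)$. To push a vertex means to reverse all arcs incident with it; the push graph $[\vec G]$ is the set of oriented graphs obtainable from $\vec G$ by pushing some set of vertices (its presentations). *)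

theory Defs
  imports Complex_Main
begin

definition oriented_graph :: "'a set \<Rightarrow> ('a \<times> 'a) set \<Rightarrow> bool" where
  "oriented_graph V A \<longleftrightarrow> finite V \<and> A \<subseteq> V \<times> V \<and>
     (\<forall>v. (v, v) \<notin> A) \<and> (\<forall>u v. (u, v) \<in> A \<longrightarrow> (v, u) \<notin> A)"

definition underlying_edges :: "('a \<times> 'a) set \<Rightarrow> 'a set set" where
  "underlying_edges A = {{u, v} | u v. (u, v) \<in> A}"

definition mad :: "'a set \<Rightarrow> ('a \<times> 'a) set \<Rightarrow> real" where
  "mad V A = Max {2 * real (card E') / real (card V') | V' E'.
      V' \<subseteq> V \<and> V' \<noteq> {} \<and> E' \<subseteq> underlying_edges A \<and> (\<forall>e\<in>E'. e \<subseteq> V')}"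

text \<open>Pushing the vertex set X: every arc with exactly one end in X is reversed
  (pushing each vertex of X once).\<close>
definition push :: "'a set \<Rightarrow> ('a \<times> 'a) set \<Rightarrow> ('a \<times> 'a) set" where
  "push X A = {(u, v). ((u, v) \<in> A \<and> (u \<in> X \<longleftrightarrow> v \<in> X)) \<or>
                        ((v, u) \<in> A \<and> \<not> (u \<in> X \<longleftrightarrow> v \<in> X))}"

datatype P3 = Pa | Pb | Pc | Pd

definition P3plus_arcs :: "(P3 \<times> P3) set" where
  "P3plus_arcs = {(Pa, Pc), (Pc, Pb), (Pb, Pa), (Pd, Pa), (Pd, Pb), (Pd, Pc)}"

definition hom_to_P3plus :: "'a set \<Rightarrow> ('a \<times> 'a) set \<Rightarrow> ('a \<Rightarrow> P3) \<Rightarrow> bool" where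
  "hom_to_P3plus V A \<phi> \<longleftrightarrow> (\<forall>(u, v) \<in> A. (\<phi> u, \<phi> v) \<in> P3plus_arcs)"

end

(*
  A push presentation of G together with a homomorphism to P3+ amounts to a colour
  \<phi> v \<in> P3 and a sign (membership in X) for every vertex, such that each arc uv is
  sent to the arc \<phi> u \<rightarrow> \<phi> v when u and v have equal signs and to \<phi> v \<rightarrow> \<phi> u otherwise.
  Since P3+ is a tournament, a vertex with a single coloured neighbour t can receive any
  colour other than \<phi> t, its sign fixing the direction of the arc. Moreover, for any two
  distinct vertices of P3+ and any prescription of the directions of arcs to them up to a
  common reversal, some third vertex realises it; so a vertex with two differently coloured
  neighbours can always be coloured. Hence a minimal counterexample has no vertex of degree
  at most 1, no two adjacent vertices of degree 2, and no vertex of degree 3 with two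
  neighbours of degree 2 (give the 3-vertex a colour avoiding those of its third neighbour
  and of the far neighbours of its two 2-neighbours, then colour the 2-neighbours).

  Discharging excludes such a graph when mad < 8/3: every arc carries charge 6, shared
  3 + 3 between its ends, except that a 2-vertex takes 4 from a neighbour of degree at
  least 3. Under the three restrictions every vertex receives at least 8, so
  6 |A| \<ge> 8 |V| and the average degree is at least 8/3.
*)

theory Submission
  imports Defs
begin

definition P3_arc :: "bool \<Rightarrow> P3 \<Rightarrow> P3 \<Rightarrow> bool" where
  "P3_arc s x y \<longleftrightarrow> (if s then (x, y) else (y, x)) \<in> P3plus_arcs"

lemma ex_P3: "(\<exists>c. P c) \<longleftrightarrow> P Pa \<or> P Pb \<or> P Pc \<or> P Pd"
  by (metis P3.exhaust)

lemma P3_arc_swap: "P3_arc s x y \<longleftrightarrow> P3_arc (\<not> s) y x"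
  by (simp add: P3_arc_def)

lemma P3_avoid_three: "\<exists>c::P3. c \<noteq> x \<and> c \<noteq> y \<and> c \<noteq> z"
  by (cases x; cases y; cases z; simp add: ex_P3)

lemma P3_arc_sign_exists: "x \<noteq> y \<Longrightarrow> \<exists>b. P3_arc (b \<longleftrightarrow> r) x y"
  by (cases x; cases y; cases r; simp add: P3_arc_def P3plus_arcs_def ex_bool_eq)

lemma P3_arc_two_exists:
  "y \<noteq> z \<Longrightarrow> \<exists>c b. P3_arc (b \<longleftrightarrow> r) c y \<and> P3_arc (b \<longleftrightarrow> r') c z"
  by (cases y; cases z; cases r; cases r'; simp add: P3_arc_def P3plus_arcs_def ex_P3 ex_bool_eq)

lemma hom_push_iff:
  "hom_to_P3plus V (push X A) \<phi> \<longleftrightarrow> (\<forall>(u, v) \<in> A. P3_arc (u \<in> X \<longleftrightarrow> v \<in> X) (\<phi> u) (\<phi> v))"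
  unfolding hom_to_P3plus_def push_def P3_arc_def by auto

definition adjacent :: "('a \<times> 'a) set \<Rightarrow> 'a \<Rightarrow> 'a \<Rightarrow> bool" where
  "adjacent A u v \<longleftrightarrow> (u, v) \<in> A \<or> (v, u) \<in> A"

definition neighbours :: "('a \<times> 'a) set \<Rightarrow> 'a set \<Rightarrow> 'a \<Rightarrow> 'a set" where
  "neighbours A W v = {u \<in> W. adjacent A u v}"

definition degree :: "('a \<times> 'a) set \<Rightarrow> 'a set \<Rightarrow> 'a \<Rightarrow> nat" where
  "degree A W v = card (neighbours A W v)"

definition push_colourable :: "('a \<times> 'a) set \<Rightarrow> 'a set \<Rightarrow> bool" where
  "push_colourable A W \<longleftrightarrow> (\<exists>X \<phi>. hom_to_P3plus W (push X (A \<inter> W \<times> W)) \<phi>)"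

lemma adjacent_sym: "adjacent A u v \<longleftrightarrow> adjacent A v u"
  by (auto simp: adjacent_def)

lemma not_adjacent_self: "oriented_graph V A \<Longrightarrow> \<not> adjacent A v v"
  by (simp add: oriented_graph_def adjacent_def)

lemma neighbours_Diff: "neighbours A (W - S) v = neighbours A W v - S"
  by (auto simp: neighbours_def)

lemma push_colouring_extend:
  assumes og: "oriented_graph V A"
    and hom: "hom_to_P3plus (W - {v}) (push X (A \<inter> (W - {v}) \<times> (W - {v}))) \<phi>"
    and nb: "\<forall>t \<in> neighbours A W v. P3_arc (b \<longleftrightarrow> (t \<in> X \<longleftrightarrow> (v, t) \<in> A)) c (\<phi> t)"
  shows "\<exists>X'. hom_to_P3plus W (push X' (A \<inter> W \<times> W)) (\<phi>(v := c))"
  \<comment> \<open>b is the sign given to v; nb holds for the arc vt as well as for the arc tv\<close>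
proof -
  let ?X' = "if b then insert v X else X - {v}" and ?\<phi>' = "\<phi>(v := c)"
  have "P3_arc (x \<in> ?X' \<longleftrightarrow> y \<in> ?X') (?\<phi>' x) (?\<phi>' y)"
    if xy: "(x, y) \<in> A" and "x \<in> W" "y \<in> W" for x y
  proof -
    have asym: "(y, x) \<notin> A" and "x \<noteq> y" using og xy unfolding oriented_graph_def by blast+
    consider "x = v" | "y = v" | "x \<noteq> v" "y \<noteq> v" by blast
    then show ?thesis
    proof cases
      case 1
      then have "y \<in> neighbours A W v" using xy \<open>y \<in> W\<close> by (auto simp: neighbours_def adjacent_def)
      then show ?thesis using nb xy 1 \<open>x \<noteq> y\<close> by auto
    next
      case 2
      then have "x \<in> neighbours A W v" using xy \<open>x \<in> W\<close> by (auto simp: neighbours_def adjacent_def)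
      then show ?thesis using nb asym 2 \<open>x \<noteq> y\<close> by (subst P3_arc_swap) auto
    next
      case 3
      then show ?thesis using hom that by (auto simp: hom_push_iff)
    qed
  qed
  then have "hom_to_P3plus W (push ?X' (A \<inter> W \<times> W)) ?\<phi>'"
    unfolding hom_push_iff by blast
  then show ?thesis by blast
qed

lemma push_colouring_extend_one:
  assumes og: "oriented_graph V A"
    and hom: "hom_to_P3plus (W - {v}) (push X (A \<inter> (W - {v}) \<times> (W - {v}))) \<phi>"
    and "neighbours A W v \<subseteq> {t}" and "c \<noteq> \<phi> t"
  shows "\<exists>X'. hom_to_P3plus W (push X' (A \<inter> W \<times> W)) (\<phi>(v := c))"
proof -
  obtain b where "P3_arc (b \<longleftrightarrow> (t \<in> X \<longleftrightarrow> (v, t) \<in> A)) c (\<phi> t)"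
    using P3_arc_sign_exists \<open>c \<noteq> \<phi> t\<close> by blast
  then show ?thesis using push_colouring_extend[OF og hom] assms(3) by blast
qed

lemma push_colouring_extend_two:
  assumes og: "oriented_graph V A"
    and hom: "hom_to_P3plus (W - {v}) (push X (A \<inter> (W - {v}) \<times> (W - {v}))) \<phi>"
    and "neighbours A W v \<subseteq> {t, t'}" and "\<phi> t \<noteq> \<phi> t'"
  shows "\<exists>X' c. hom_to_P3plus W (push X' (A \<inter> W \<times> W)) (\<phi>(v := c))"
proof -
  obtain c b where "P3_arc (b \<longleftrightarrow> (t \<in> X \<longleftrightarrow> (v, t) \<in> A)) c (\<phi> t)"
    and "P3_arc (b \<longleftrightarrow> (t' \<in> X \<longleftrightarrow> (v, t') \<in> A)) c (\<phi> t')"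
    using P3_arc_two_exists \<open>\<phi> t \<noteq> \<phi> t'\<close> by blast
  then show ?thesis using push_colouring_extend[OF og hom] assms(3) by blast
qed

lemma card_2_obtain_other:
  assumes "card S = 2" and "a \<in> S"
  obtains b where "S = {a, b}" and "b \<noteq> a"
  using assms by (auto simp: card_2_iff)

lemma push_colourable_low_degree:
  assumes og: "oriented_graph V A" and fW: "finite W"
    and col: "push_colourable A (W - {v})" and deg: "degree A W v \<le> 1"
  shows "push_colourable A W"
proof -
  obtain X \<phi> where hom: "hom_to_P3plus (W - {v}) (push X (A \<inter> (W - {v}) \<times> (W - {v}))) \<phi>"
    using col by (auto simp: push_colourable_def)
  have "finite (neighbours A W v)" using fW by (simp add: neighbours_def)
  then obtain t where t: "neighbours A W v \<subseteq> {t}"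
    using deg by (metis card_le_Suc0_iff_eq One_nat_def degree_def empty_subsetI insert_subset subsetI singletonI)
  obtain c where "c \<noteq> \<phi> t" using P3_avoid_three by blast
  then obtain X' where "hom_to_P3plus W (push X' (A \<inter> W \<times> W)) (\<phi>(v := c))"
    using push_colouring_extend_one[OF og hom t] by blast
  then show ?thesis by (auto simp: push_colourable_def)
qed

lemma push_colourable_adjacent_2_vertices:
  assumes og: "oriented_graph V A"
    and col: "push_colourable A (W - {u} - {v})" and uv: "adjacent A u v"
    and du: "degree A W u = 2" and dv: "degree A W v = 2" and "u \<in> W" "v \<in> W"
  shows "push_colourable A W"
proof -
  obtain X \<phi> where hom: "hom_to_P3plus (W - {u} - {v}) (push X (A \<inter> (W - {u} - {v}) \<times> (W - {u} - {v}))) \<phi>"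
    using col by (auto simp: push_colourable_def)
  have "v \<in> neighbours A W u" "u \<in> neighbours A W v"
    using uv \<open>u \<in> W\<close> \<open>v \<in> W\<close> by (auto simp: neighbours_def adjacent_def)
  then obtain p q where p: "neighbours A W u = {v, p}" "p \<noteq> v" and q: "neighbours A W v = {u, q}"
    using du dv card_2_obtain_other unfolding degree_def by metis
  obtain c where c: "c \<noteq> \<phi> p" "c \<noteq> \<phi> q" using P3_avoid_three by blast
  have "neighbours A (W - {u}) v \<subseteq> {q}" using q by (auto simp: neighbours_Diff)
  then obtain X1 where hom1: "hom_to_P3plus (W - {u}) (push X1 (A \<inter> (W - {u}) \<times> (W - {u}))) (\<phi>(v := c))"
    using push_colouring_extend_one[OF og hom _ c(2)] by blast
  have "neighbours A W u \<subseteq> {v, p}" using p by simp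
  moreover have "(\<phi>(v := c)) v \<noteq> (\<phi>(v := c)) p" using c p by simp
  ultimately obtain X2 c' where "hom_to_P3plus W (push X2 (A \<inter> W \<times> W)) (\<phi>(v := c, u := c'))"
    using push_colouring_extend_two[OF og hom1] by blast
  then show ?thesis by (auto simp: push_colourable_def)
qed

lemma push_colourable_3_vertex:
  assumes og: "oriented_graph V A"
    and col: "push_colourable A (W - {b} - {a} - {v})"
    and dv: "degree A W v = 3" and a: "a \<in> neighbours A W v" and b: "b \<in> neighbours A W v"
    and "a \<noteq> b" and da: "degree A W a = 2" and db: "degree A W b = 2"
    and ab: "\<not> adjacent A a b" and "v \<in> W"
  shows "push_colourable A W"
proof -
  obtain X \<phi> where hom: "hom_to_P3plus (W - {b} - {a} - {v})
      (push X (A \<inter> (W - {b} - {a} - {v}) \<times> (W - {b} - {a} - {v}))) \<phi>"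
    using col by (auto simp: push_colourable_def)
  have "card (neighbours A W v - {a, b}) = 1"
    using dv a b \<open>a \<noteq> b\<close> by (simp add: degree_def card_Diff_subset)
  then obtain w where w: "neighbours A W v - {a, b} = {w}" by (rule card_1_singletonE)
  have "v \<in> neighbours A W a" "v \<in> neighbours A W b"
    using a b \<open>v \<in> W\<close> by (auto simp: neighbours_def adjacent_sym)
  then obtain u1 u2 where u1: "neighbours A W a = {v, u1}" "u1 \<noteq> v"
    and u2: "neighbours A W b = {v, u2}" "u2 \<noteq> v"
    using da db card_2_obtain_other unfolding degree_def by metis
  have "u2 \<noteq> a" using u2 ab by (auto simp: neighbours_def adjacent_sym)
  obtain c where c: "c \<noteq> \<phi> w" "c \<noteq> \<phi> u1" "c \<noteq> \<phi> u2" using P3_avoid_three by blast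
  have "neighbours A (W - {b} - {a}) v \<subseteq> {w}" using w by (auto simp: neighbours_Diff)
  then obtain X1 where hom1: "hom_to_P3plus (W - {b} - {a})
      (push X1 (A \<inter> (W - {b} - {a}) \<times> (W - {b} - {a}))) (\<phi>(v := c))"
    using push_colouring_extend_one[OF og hom _ c(1)] by blast
  have "neighbours A (W - {b}) a \<subseteq> {v, u1}" using u1 by (auto simp: neighbours_Diff)
  moreover have "(\<phi>(v := c)) v \<noteq> (\<phi>(v := c)) u1" using c u1 by simp
  ultimately obtain X2 ca where hom2: "hom_to_P3plus (W - {b})
      (push X2 (A \<inter> (W - {b}) \<times> (W - {b}))) (\<phi>(v := c, a := ca))"
    using push_colouring_extend_two[OF og hom1] by blast
  have "neighbours A W b \<subseteq> {v, u2}" using u2 by simp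
  moreover have "(\<phi>(v := c, a := ca)) v \<noteq> (\<phi>(v := c, a := ca)) u2"
    using c u2 \<open>u2 \<noteq> a\<close> a not_adjacent_self[OF og] by (auto simp: neighbours_def)
  ultimately obtain X3 cb where "hom_to_P3plus W (push X3 (A \<inter> W \<times> W)) (\<phi>(v := c, a := ca, b := cb))"
    using push_colouring_extend_two[OF og hom2] by blast
  then show ?thesis by (auto simp: push_colourable_def)
qed

lemma sum_neighbours_eq_sum_arcs:
  assumes og: "oriented_graph V A" and "W \<subseteq> V"
  shows "(\<Sum>v\<in>W. \<Sum>u\<in>neighbours A W v. g v u) = (\<Sum>(x, y)\<in>A \<inter> W \<times> W. g x y + g y x)"
proof -
  let ?E = "A \<inter> W \<times> W"
  have fW: "finite W" using og \<open>W \<subseteq> V\<close> finite_subset by (auto simp: oriented_graph_def)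
  then have fE: "finite ?E" by simp
  have disj: "?E \<inter> prod.swap ` ?E = {}" using og by (auto simp: oriented_graph_def)
  have arcs: "Sigma W (neighbours A W) = ?E \<union> prod.swap ` ?E"
    by (auto simp: neighbours_def adjacent_def)
  have "(\<Sum>v\<in>W. \<Sum>u\<in>neighbours A W v. g v u) = (\<Sum>(x, y)\<in>Sigma W (neighbours A W). g x y)"
    using fW by (intro sum.Sigma) (auto simp: neighbours_def)
  also have "\<dots> = (\<Sum>(x, y)\<in>?E \<union> prod.swap ` ?E. g x y)"
    by (simp only: arcs)
  also have "\<dots> = (\<Sum>(x, y)\<in>?E. g x y) + (\<Sum>(x, y)\<in>prod.swap ` ?E. g x y)"
    using fE disj by (simp add: sum.union_disjoint)
  also have "(\<Sum>(x, y)\<in>prod.swap ` ?E. g x y) = (\<Sum>(x, y)\<in>?E. g y x)"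
    by (subst sum.reindex) (auto simp: case_prod_beta)
  finally show ?thesis by (simp add: sum.distrib case_prod_beta)
qed

definition charge :: "('a \<times> 'a) set \<Rightarrow> 'a set \<Rightarrow> 'a \<Rightarrow> 'a \<Rightarrow> int" where
  "charge A W v u = 3 + (if degree A W v = 2 \<and> 3 \<le> degree A W u then 1 else 0)
                      - (if 3 \<le> degree A W v \<and> degree A W u = 2 then 1 else 0)"

lemma charge_antisym: "charge A W x y + charge A W y x = 6"
  by (auto simp: charge_def)

lemma charge_received_ge:
  assumes "v \<in> W"
    and min_deg: "\<forall>u\<in>W. 2 \<le> degree A W u"
    and no_22: "\<forall>u\<in>neighbours A W v. degree A W v = 2 \<longrightarrow> degree A W u \<noteq> 2"
    and no_322: "\<forall>a\<in>neighbours A W v. \<forall>b\<in>neighbours A W v.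
                   degree A W v = 3 \<longrightarrow> degree A W a = 2 \<longrightarrow> degree A W b = 2 \<longrightarrow> a = b"
  shows "8 \<le> (\<Sum>u\<in>neighbours A W v. charge A W v u)"
proof -
  let ?N = "neighbours A W v"
  have deg_N: "2 \<le> degree A W u" if "u \<in> ?N" for u
    using min_deg that by (auto simp: neighbours_def)
  consider "degree A W v = 2" | "degree A W v = 3" | "4 \<le> degree A W v"
    using min_deg \<open>v \<in> W\<close> by force
  then show ?thesis
  proof cases
    case 1
    then have "charge A W v u = 4" if "u \<in> ?N" for u
      using no_22 deg_N[OF that] that by (auto simp: charge_def)
    then show ?thesis using 1 by (simp add: degree_def)
  next
    case 2
    then obtain x y z where N: "?N = {x, y, z}" "x \<noteq> y" "y \<noteq> z" "x \<noteq> z"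
      by (auto simp: degree_def card_3_iff)
    have ch: "charge A W v u = (if degree A W u = 2 then 2 else 3)" for u
      using 2 by (simp add: charge_def)
    have "\<not> (degree A W x = 2 \<and> degree A W y = 2)" "\<not> (degree A W y = 2 \<and> degree A W z = 2)"
      "\<not> (degree A W x = 2 \<and> degree A W z = 2)"
      using no_322 2 N by blast+
    then show ?thesis using N ch[of x] ch[of y] ch[of z] by (auto split: if_splits)
  next
    case 3
    have "2 \<le> charge A W v u" for u by (simp add: charge_def)
    then have "of_nat (card ?N) * 2 \<le> (\<Sum>u\<in>?N. charge A W v u)"
      by (intro sum_bounded_below)
    then show ?thesis using 3 by (simp add: degree_def)
  qed
qed

lemma arcs_lower_bound:
  assumes og: "oriented_graph V A" and "W \<subseteq> V"
    and min_deg: "\<forall>u\<in>W. 2 \<le> degree A W u"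
    and no_22: "\<forall>u\<in>W. \<forall>v\<in>W. adjacent A u v \<longrightarrow> degree A W u = 2 \<longrightarrow> degree A W v \<noteq> 2"
    and no_322: "\<forall>v\<in>W. \<forall>a\<in>neighbours A W v. \<forall>b\<in>neighbours A W v.
                   degree A W v = 3 \<longrightarrow> degree A W a = 2 \<longrightarrow> degree A W b = 2 \<longrightarrow> a = b"
  shows "4 * card W \<le> 3 * card (A \<inter> W \<times> W)"
proof -
  have fW: "finite W" using og \<open>W \<subseteq> V\<close> finite_subset by (auto simp: oriented_graph_def)
  have "8 \<le> (\<Sum>u\<in>neighbours A W v. charge A W v u)" if "v \<in> W" for v
    using charge_received_ge[OF that min_deg] no_22 no_322 that
    by (auto simp: neighbours_def adjacent_sym)
  then have "of_nat (card W) * 8 \<le> (\<Sum>v\<in>W. \<Sum>u\<in>neighbours A W v. charge A W v u)"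
    by (intro sum_bounded_below)
  also have "\<dots> = (\<Sum>(x, y)\<in>A \<inter> W \<times> W. charge A W x y + charge A W y x)"
    by (rule sum_neighbours_eq_sum_arcs[OF og \<open>W \<subseteq> V\<close>])
  also have "\<dots> = 6 * int (card (A \<inter> W \<times> W))"
    by (simp add: charge_antisym case_prod_beta)
  finally show ?thesis by linarith
qed

lemma density_le_mad:
  assumes og: "oriented_graph V A" and "W \<subseteq> V" and "W \<noteq> {}"
  shows "2 * real (card (A \<inter> W \<times> W)) / real (card W) \<le> mad V A"
proof -
  have fV: "finite V" and AV: "A \<subseteq> V \<times> V" using og by (auto simp: oriented_graph_def)
  define edge where "edge = (\<lambda>(u::'a, v::'a). {u, v})"
  have "inj_on edge (A \<inter> W \<times> W)"
    using og by (auto simp: inj_on_def edge_def doubleton_eq_iff oriented_graph_def)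
  then have card_edges: "card (edge ` (A \<inter> W \<times> W)) = card (A \<inter> W \<times> W)"
    by (rule card_image)
  let ?S = "{2 * real (card E') / real (card V') | V' E'.
      V' \<subseteq> V \<and> V' \<noteq> {} \<and> E' \<subseteq> underlying_edges A \<and> (\<forall>e\<in>E'. e \<subseteq> V')}"
  have "finite A" using finite_subset[OF AV] fV by simp
  have "underlying_edges A \<subseteq> edge ` A" by (auto simp: underlying_edges_def edge_def)
  then have "finite (underlying_edges A)"
    by (rule finite_subset) (simp add: \<open>finite A\<close>)
  let ?density = "\<lambda>(V', E'). 2 * real (card E') / real (card V')"
  have "?S \<subseteq> ?density ` (Pow V \<times> Pow (underlying_edges A))"
  proof
    fix x assume "x \<in> ?S"
    then obtain V' E' where "x = ?density (V', E')" "V' \<subseteq> V" "E' \<subseteq> underlying_edges A"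
      by auto
    then show "x \<in> ?density ` (Pow V \<times> Pow (underlying_edges A))" by blast
  qed
  then have "finite ?S"
    by (rule finite_subset) (simp add: fV \<open>finite (underlying_edges A)\<close>)
  moreover have "2 * real (card (edge ` (A \<inter> W \<times> W))) / real (card W) \<in> ?S"
    using assms by (intro CollectI exI[of _ W] exI[of _ "edge ` (A \<inter> W \<times> W)"])
      (auto simp: edge_def underlying_edges_def)
  ultimately show ?thesis
    unfolding mad_def card_edges[symmetric] by (rule Max_ge)
qed

lemma push_colourable_if_sparse:
  assumes og: "oriented_graph V A" and "W \<subseteq> V"
    and sparse: "3 * card (A \<inter> W \<times> W) < 4 * card W"
    and smaller: "\<And>W'. W' \<subset> W \<Longrightarrow> push_colourable A W'"
  shows "push_colourable A W"
proof -
  have fW: "finite W" using og \<open>W \<subseteq> V\<close> finite_subset by (auto simp: oriented_graph_def)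
  consider (low) v where "v \<in> W" "\<not> 2 \<le> degree A W v"
    | (pair) u v where "u \<in> W" "v \<in> W" "adjacent A u v" "degree A W u = 2" "degree A W v = 2"
    | (triple) v a b where "v \<in> W" "a \<in> neighbours A W v" "b \<in> neighbours A W v" "a \<noteq> b"
        "degree A W v = 3" "degree A W a = 2" "degree A W b = 2"
    using arcs_lower_bound[OF og \<open>W \<subseteq> V\<close>] sparse by fastforce
  then show ?thesis
  proof cases
    case low
    have "push_colourable A (W - {v})" using low(1) by (intro smaller) auto
    moreover have "degree A W v \<le> 1" using low(2) by simp
    ultimately show ?thesis by (rule push_colourable_low_degree[OF og fW])
  next
    case pair
    have "push_colourable A (W - {u} - {v})"
      using pair(1) by (intro smaller) auto
    then show ?thesis by (rule push_colourable_adjacent_2_vertices[OF og _ pair(3-5,1,2)])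
  next
    case triple
    have "a \<in> W" "b \<in> W" using triple by (auto simp: neighbours_def)
    show ?thesis
    proof (cases "adjacent A a b")
      case True
      have "push_colourable A (W - {a} - {b})"
        using \<open>a \<in> W\<close> by (intro smaller) auto
      then show ?thesis
        by (rule push_colourable_adjacent_2_vertices[OF og _ True triple(6,7) \<open>a \<in> W\<close> \<open>b \<in> W\<close>])
    next
      case False
      have "push_colourable A (W - {b} - {a} - {v})"
        using \<open>b \<in> W\<close> by (intro smaller) auto
      then show ?thesis
        by (rule push_colourable_3_vertex[OF og _ triple(5,2,3,4,6,7) False triple(1)])
    qed
  qed
qed

lemma push_colourable_if_mad_lt:
  assumes og: "oriented_graph V A" and mad: "mad V A < 8 / 3" and "W \<subseteq> V"
  shows "push_colourable A W"
proof -
  have "finite W" using og \<open>W \<subseteq> V\<close> finite_subset by (auto simp: oriented_graph_def)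
  then show ?thesis using \<open>W \<subseteq> V\<close>
  proof (induction W rule: finite_psubset_induct)
    case (psubset W)
    show ?case
    proof (cases "W = {}")
      case True
      then show ?thesis by (simp add: push_colourable_def hom_to_P3plus_def push_def)
    next
      case False
      have "2 * real (card (A \<inter> W \<times> W)) / real (card W) < 8 / 3"
        using density_le_mad[OF og psubset.prems False] mad by linarith
      moreover have "0 < real (card W)" using psubset.hyps(1) False by (simp add: card_gt_0_iff)
      ultimately have "3 * card (A \<inter> W \<times> W) < 4 * card W"
        by (simp add: pos_divide_less_eq)
      then show ?thesis
      proof (rule push_colourable_if_sparse[OF og psubset.prems])
        show "push_colourable A W'" if "W' \<subset> W" for W'
          using psubset.IH psubset.prems that by blast
      qed
    qed
  qed
qed

lemma push_Int_vertices: "A \<subseteq> V \<times> V \<Longrightarrow> push (X \<inter> V) A = push X A"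
  unfolding push_def by (auto dest: subsetD)

theorem mainTheorem12:
  fixes V :: "'a set" and A :: "('a \<times> 'a) set"
  assumes "oriented_graph V A"
    and "mad V A < 8 / 3"
  shows "\<exists>X \<subseteq> V. \<exists>\<phi>. hom_to_P3plus V (push X A) \<phi>"
proof -
  have AV: "A \<subseteq> V \<times> V" using assms(1) by (simp add: oriented_graph_def)
  then have "A \<inter> V \<times> V = A" by blast
  then obtain X \<phi> where "hom_to_P3plus V (push X A) \<phi>"
    using push_colourable_if_mad_lt[OF assms order_refl] by (auto simp: push_colourable_def)
  then have "hom_to_P3plus V (push (X \<inter> V) A) \<phi>" by (simp add: push_Int_vertices[OF AV])
  then show ?thesis by blast
qed

end
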